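(* Let $(U_n)_{n\in\mathbb N}$ and $(V_n)_{n\in\mathbb N}$ be sequences of real-valued uniformly integrable random variables with $U_n\le V_n$ almost surely for all $n$. Assume $V_n\to V$ in distribution for some random variable $V$. If $\mathbb E[U_n]\to\mathbb E[V]$, then $U_n\to V$ in distribution as $n\to\infty$. *)

theory Defs
  imports "HOL-Probability.Probability"
begin

definition uniformly_integrable :: "'a measure \<Rightarrow> (nat \<Rightarrow> 'a \<Rightarrow> real) \<Rightarrow> bool" where
  "uniformly_integrable M X \<longleftrightarrow>
     (\<forall>n. integrable M (X n)) \<and>
     (\<forall>e>0. \<exists>K. \<forall>n. (\<integral>x. \<bar>X n x\<bar> * indicator {y. K < \<bar>X n y\<bar>} x \<partial>M) \<le> e)"

end

theory Submission
  imports Defs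
begin

(*
  Skorohod's representation turns the convergence in distribution of V'_n into pointwise
  convergence of random variables with the same laws; uniform integrability only depends on
  the laws, so Vitali's convergence theorem (by truncation and Fatou's lemma) gives
  E V'_n \<longrightarrow> E V, hence E (V'_n - U_n) \<longrightarrow> 0.  The continuous step functions h = cts_step x y
  determine weak convergence; they are antitone and (1 / (y - x))-Lipschitz, so U_n \<le> V'_n gives
  |E h(U_n) - E h(V'_n)| \<le> E (V'_n - U_n) / (y - x) \<longrightarrow> 0, and E h(U_n) inherits the limit E h(V).
*)

lemma uniformly_integrable_integrable: "uniformly_integrable M X \<Longrightarrow> integrable M (X n)"
  unfolding uniformly_integrable_def by blast

lemma Fatou_integrable_le:
  fixes f :: "nat \<Rightarrow> 'a \<Rightarrow> real" and g :: "'a \<Rightarrow> real"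
  assumes [measurable]: "\<And>n. f n \<in> borel_measurable M" "g \<in> borel_measurable M"
    and nonneg: "\<And>n x. x \<in> space M \<Longrightarrow> 0 \<le> f n x"
    and lim: "\<And>x. x \<in> space M \<Longrightarrow> (\<lambda>n. f n x) \<longlonglongrightarrow> g x"
    and int: "\<And>n. integrable M (f n)"
    and bound: "\<And>n. integral\<^sup>L M (f n) \<le> C"
  shows "integrable M g" "integral\<^sup>L M g \<le> C"
proof -
  have g_nonneg: "0 \<le> g x" if "x \<in> space M" for x
    using lim[OF that] nonneg[OF that] by (meson LIMSEQ_le_const)
  have nn_f: "(\<integral>\<^sup>+x. ennreal (f n x) \<partial>M) = ennreal (integral\<^sup>L M (f n))" for n
    using nonneg by (intro nn_integral_eq_integral int) auto
  have "(\<integral>\<^sup>+x. ennreal (g x) \<partial>M) = (\<integral>\<^sup>+x. liminf (\<lambda>n. ennreal (f n x)) \<partial>M)"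
    by (intro nn_integral_cong lim_imp_Liminf[symmetric] tendsto_ennrealI lim) auto
  also have "\<dots> \<le> liminf (\<lambda>n. \<integral>\<^sup>+x. ennreal (f n x) \<partial>M)"
    by (intro nn_integral_liminf) auto
  also have "\<dots> \<le> limsup (\<lambda>n. \<integral>\<^sup>+x. ennreal (f n x) \<partial>M)"
    by (intro Liminf_le_Limsup) simp
  also have "\<dots> \<le> ennreal C"
    using bound by (intro Limsup_bounded always_eventually allI) (simp add: nn_f ennreal_leI)
  finally have le: "(\<integral>\<^sup>+x. ennreal (g x) \<partial>M) \<le> ennreal C" .
  then show "integrable M g"
    by (intro integrableI_nonneg AE_I2 g_nonneg) (auto simp: top_unique intro: le_less_trans)
  have "0 \<le> C"
    using bound[of 0] integral_nonneg_AE[of "f 0" M] nonneg by (meson AE_I2 order_trans)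
  moreover have "integral\<^sup>L M g = enn2real (\<integral>\<^sup>+x. ennreal (g x) \<partial>M)"
    by (intro integral_eq_nn_integral AE_I2 g_nonneg) auto
  ultimately show "integral\<^sup>L M g \<le> C"
    using le by (simp add: enn2real_leI)
qed

lemma uniformly_integrable_excess_bound:
  fixes X :: "nat \<Rightarrow> 'a \<Rightarrow> real"
  assumes "uniformly_integrable M X" "0 < e"
  obtains K where "0 \<le> K" "\<And>n. (\<integral>x. max (\<bar>X n x\<bar> - K) 0 \<partial>M) \<le> e"
proof -
  obtain K where K: "\<And>n. (\<integral>x. \<bar>X n x\<bar> * indicator {y. K < \<bar>X n y\<bar>} x \<partial>M) \<le> e"
    using assms unfolding uniformly_integrable_def by blast
  have int: "integrable M (X n)" for n
    using assms(1) by (rule uniformly_integrable_integrable)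
  have excess_le: "max (\<bar>t\<bar> - max K 0) 0 \<le> \<bar>t\<bar> * indicator {y. K < \<bar>y\<bar>} t" for t :: real
    by (auto simp: indicator_def)
  show ?thesis
  proof (rule that[of "max K 0"])
    fix n
    have [measurable]: "X n \<in> borel_measurable M"
      using int by blast
    have "(\<integral>x. max (\<bar>X n x\<bar> - max K 0) 0 \<partial>M) \<le> (\<integral>x. \<bar>X n x\<bar> * indicator {y. K < \<bar>X n y\<bar>} x \<partial>M)"
      using excess_le[of "X n _"]
      by (intro integral_mono Bochner_Integration.integrable_bound[OF integrable_abs[OF int[of n]]])
         (auto simp: indicator_def)
    then show "(\<integral>x. max (\<bar>X n x\<bar> - max K 0) 0 \<partial>M) \<le> e"
      using K[of n] by linarith
  qed simp
qed

lemma (in finite_measure) uniformly_integrable_L1_bounded: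
  fixes X :: "nat \<Rightarrow> 'a \<Rightarrow> real"
  assumes "uniformly_integrable M X"
  obtains C where "\<And>n. (\<integral>x. \<bar>X n x\<bar> \<partial>M) \<le> C"
proof -
  obtain K where "0 \<le> K" and K: "\<And>n. (\<integral>x. max (\<bar>X n x\<bar> - K) 0 \<partial>M) \<le> 1"
    using uniformly_integrable_excess_bound[OF assms, of 1] by auto
  have int: "integrable M (X n)" for n
    using assms by (rule uniformly_integrable_integrable)
  have "(\<integral>x. \<bar>X n x\<bar> \<partial>M) \<le> K * measure M (space M) + 1" for n
  proof -
    have "(\<integral>x. \<bar>X n x\<bar> \<partial>M) \<le> (\<integral>x. K + max (\<bar>X n x\<bar> - K) 0 \<partial>M)"
      using int[of n] by (intro integral_mono) auto
    also have "\<dots> = K * measure M (space M) + (\<integral>x. max (\<bar>X n x\<bar> - K) 0 \<partial>M)"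
      using int[of n] by (subst Bochner_Integration.integral_add) auto
    finally show ?thesis
      using K[of n] by linarith
  qed
  then show ?thesis
    by (rule that)
qed

definition truncate :: "real \<Rightarrow> real \<Rightarrow> real" where
  "truncate K x = max (- K) (min K x)"

lemma truncate_measurable [measurable]: "truncate K \<in> borel_measurable borel"
  unfolding truncate_def[abs_def] by measurable

lemma tendsto_truncate [tendsto_intros]:
  "(f \<longlongrightarrow> l) F \<Longrightarrow> ((\<lambda>x. truncate K (f x)) \<longlongrightarrow> truncate K l) F"
  unfolding truncate_def by (intro tendsto_intros)

lemma abs_truncate_le: "0 \<le> K \<Longrightarrow> \<bar>truncate K x\<bar> \<le> K"
  by (auto simp: truncate_def)

lemma abs_diff_truncate: "0 \<le> K \<Longrightarrow> \<bar>x - truncate K x\<bar> = max (\<bar>x\<bar> - K) 0"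
  by (auto simp: truncate_def)

lemma (in finite_measure) abs_integral_diff_truncate_le:
  fixes f :: "'a \<Rightarrow> real"
  assumes "integrable M f" "0 \<le> K"
  shows "\<bar>(\<integral>x. f x \<partial>M) - (\<integral>x. truncate K (f x) \<partial>M)\<bar> \<le> (\<integral>x. max (\<bar>f x\<bar> - K) 0 \<partial>M)"
proof -
  have [measurable]: "f \<in> borel_measurable M"
    using assms(1) by blast
  have int_trunc: "integrable M (\<lambda>x. truncate K (f x))"
    using assms(2) by (intro integrable_const_bound[where B = K]) (auto simp: abs_truncate_le)
  have "\<bar>(\<integral>x. f x \<partial>M) - (\<integral>x. truncate K (f x) \<partial>M)\<bar> = \<bar>\<integral>x. f x - truncate K (f x) \<partial>M\<bar>"
    using assms(1) int_trunc by simp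
  also have "\<dots> \<le> (\<integral>x. \<bar>f x - truncate K (f x)\<bar> \<partial>M)"
    by (rule integral_abs_bound)
  also have "\<dots> = (\<integral>x. max (\<bar>f x\<bar> - K) 0 \<partial>M)"
    using assms(2) by (simp add: abs_diff_truncate)
  finally show ?thesis .
qed

lemma (in finite_measure) integrable_limit_of_uniformly_integrable:
  fixes X :: "nat \<Rightarrow> 'a \<Rightarrow> real"
  assumes UI: "uniformly_integrable M X" and [measurable]: "Z \<in> borel_measurable M"
    and lim: "\<And>x. x \<in> space M \<Longrightarrow> (\<lambda>n. X n x) \<longlonglongrightarrow> Z x"
  shows "integrable M Z"
proof -
  obtain C where C: "\<And>n. (\<integral>x. \<bar>X n x\<bar> \<partial>M) \<le> C"
    using uniformly_integrable_L1_bounded[OF UI] by blast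
  have int: "integrable M (X n)" for n
    using UI by (rule uniformly_integrable_integrable)
  have "integrable M (\<lambda>x. \<bar>Z x\<bar>)"
  proof (rule Fatou_integrable_le(1)[of "\<lambda>n x. \<bar>X n x\<bar>"])
    show "(\<lambda>n. \<bar>X n x\<bar>) \<longlonglongrightarrow> \<bar>Z x\<bar>" if "x \<in> space M" for x
      using lim[OF that] by (rule tendsto_rabs)
  qed (use C int in auto)
  then show ?thesis
    by (rule integrable_abs_cancel) simp
qed

lemma excess_limit_le:
  fixes X :: "nat \<Rightarrow> 'a \<Rightarrow> real"
  assumes int: "\<And>n. integrable M (X n)" and [measurable]: "Z \<in> borel_measurable M"
    and lim: "\<And>x. x \<in> space M \<Longrightarrow> (\<lambda>n. X n x) \<longlonglongrightarrow> Z x"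
    and "0 \<le> K" and excess: "\<And>n. (\<integral>x. max (\<bar>X n x\<bar> - K) 0 \<partial>M) \<le> e"
  shows "(\<integral>x. max (\<bar>Z x\<bar> - K) 0 \<partial>M) \<le> e"
proof (rule Fatou_integrable_le(2)[of "\<lambda>n x. max (\<bar>X n x\<bar> - K) 0"])
  show "integrable M (\<lambda>x. max (\<bar>X n x\<bar> - K) 0)" for n
    using \<open>0 \<le> K\<close> int[of n]
    by (intro Bochner_Integration.integrable_bound[OF integrable_abs[OF int[of n]]]) auto
  show "(\<lambda>n. max (\<bar>X n x\<bar> - K) 0) \<longlonglongrightarrow> max (\<bar>Z x\<bar> - K) 0" if "x \<in> space M" for x
    using lim[OF that] by (intro tendsto_max tendsto_diff tendsto_rabs tendsto_const)
qed (use int excess in auto)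

lemma (in finite_measure) integral_tendsto_of_uniformly_integrable:
  fixes X :: "nat \<Rightarrow> 'a \<Rightarrow> real"
  assumes UI: "uniformly_integrable M X" and [measurable]: "Z \<in> borel_measurable M"
    and lim: "\<And>x. x \<in> space M \<Longrightarrow> (\<lambda>n. X n x) \<longlonglongrightarrow> Z x"
  shows "(\<lambda>n. \<integral>x. X n x \<partial>M) \<longlonglongrightarrow> (\<integral>x. Z x \<partial>M)"
proof (rule LIMSEQ_I)
  fix r :: real
  assume "0 < r"
  have int: "integrable M (X n)" for n
    using UI by (rule uniformly_integrable_integrable)
  then have [measurable]: "X n \<in> borel_measurable M" for n
    by blast
  obtain K where "0 \<le> K" and excess_X: "\<And>n. (\<integral>x. max (\<bar>X n x\<bar> - K) 0 \<partial>M) \<le> r / 4"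
    using uniformly_integrable_excess_bound[OF UI, of "r / 4"] \<open>0 < r\<close> by auto
  have int_Z: "integrable M Z"
    by (rule integrable_limit_of_uniformly_integrable[OF UI _ lim]) simp
  have excess_Z: "(\<integral>x. max (\<bar>Z x\<bar> - K) 0 \<partial>M) \<le> r / 4"
    by (rule excess_limit_le[OF int _ lim \<open>0 \<le> K\<close> excess_X]) simp
  have "(\<lambda>n. \<integral>x. truncate K (X n x) \<partial>M) \<longlonglongrightarrow> (\<integral>x. truncate K (Z x) \<partial>M)"
  proof (rule integral_dominated_convergence[where w = "\<lambda>_. K"])
    show "AE x in M. (\<lambda>n. truncate K (X n x)) \<longlonglongrightarrow> truncate K (Z x)"
      using lim by (intro AE_I2 tendsto_truncate) simp
  qed (use \<open>0 \<le> K\<close> in \<open>auto simp: abs_truncate_le\<close>)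
  from LIMSEQ_D[OF this, of "r / 2"] \<open>0 < r\<close> obtain n0 where
    n0: "\<And>n. n \<ge> n0 \<Longrightarrow> \<bar>(\<integral>x. truncate K (X n x) \<partial>M) - (\<integral>x. truncate K (Z x) \<partial>M)\<bar> < r / 2"
    by auto
  have "\<bar>(\<integral>x. X n x \<partial>M) - (\<integral>x. Z x \<partial>M)\<bar> < r" if "n \<ge> n0" for n
    using abs_integral_diff_truncate_le[OF int \<open>0 \<le> K\<close>, of n]
      abs_integral_diff_truncate_le[OF int_Z \<open>0 \<le> K\<close>]
      excess_X[of n] excess_Z n0[OF that]
    by linarith
  then show "\<exists>n0. \<forall>n\<ge>n0. norm ((\<integral>x. X n x \<partial>M) - (\<integral>x. Z x \<partial>M)) < r"
    by auto
qed

lemma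
  fixes f :: "'c::topological_space \<Rightarrow> 'b::{banach, second_countable_topology}"
  assumes eq: "distr N borel Y = distr M borel X"
    and [measurable]: "X \<in> borel_measurable M" "Y \<in> borel_measurable N" "f \<in> borel_measurable borel"
  shows integrable_comp_eq_of_distr_eq: "integrable N (\<lambda>x. f (Y x)) \<longleftrightarrow> integrable M (\<lambda>x. f (X x))"
    and integral_comp_eq_of_distr_eq: "(\<integral>x. f (Y x) \<partial>N) = (\<integral>x. f (X x) \<partial>M)"
proof -
  show "integrable N (\<lambda>x. f (Y x)) \<longleftrightarrow> integrable M (\<lambda>x. f (X x))"
    using integrable_distr_eq[of Y N borel f] integrable_distr_eq[of X M borel f] eq by simp
  show "(\<integral>x. f (Y x) \<partial>N) = (\<integral>x. f (X x) \<partial>M)"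
    using integral_distr[of Y N borel f] integral_distr[of X M borel f] eq by simp
qed

lemma uniformly_integrable_distr_eq:
  fixes X :: "nat \<Rightarrow> 'a \<Rightarrow> real" and Y :: "nat \<Rightarrow> 'b \<Rightarrow> real"
  assumes UI: "uniformly_integrable M X"
    and eq: "\<And>n. distr N borel (Y n) = distr M borel (X n)"
    and [measurable]: "\<And>n. Y n \<in> borel_measurable N"
  shows "uniformly_integrable N Y"
proof -
  have int: "integrable M (X n)" for n
    using UI by (rule uniformly_integrable_integrable)
  then have [measurable]: "X n \<in> borel_measurable M" for n
    by blast
  have tail_eq: "(\<integral>x. \<bar>Y n x\<bar> * indicator {y. K < \<bar>Y n y\<bar>} x \<partial>N)
      = (\<integral>x. \<bar>X n x\<bar> * indicator {y. K < \<bar>X n y\<bar>} x \<partial>M)" for n K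
  proof -
    have "(\<lambda>t::real. \<bar>t\<bar> * indicator {y. K < \<bar>y\<bar>} t) \<in> borel_measurable borel"
      by measurable
    from integral_comp_eq_of_distr_eq[OF eq \<open>X n \<in> borel_measurable M\<close> \<open>Y n \<in> borel_measurable N\<close> this]
    show ?thesis
      by (simp add: indicator_def)
  qed
  have "integrable N (Y n)" for n
    using integrable_comp_eq_of_distr_eq[OF eq _ _ measurable_ident] int by simp
  then show ?thesis
    using UI unfolding uniformly_integrable_def tail_eq by blast
qed

lemma (in prob_space) integral_tendsto_of_weak_conv_uniformly_integrable:
  fixes X :: "nat \<Rightarrow> 'a \<Rightarrow> real"
  assumes UI: "uniformly_integrable M X" and [measurable]: "Z \<in> borel_measurable M"
    and weak: "weak_conv_m (\<lambda>n. distr M borel (X n)) (distr M borel Z)"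
  shows "(\<lambda>n. \<integral>x. X n x \<partial>M) \<longlonglongrightarrow> (\<integral>x. Z x \<partial>M)"
proof -
  have [measurable]: "X n \<in> borel_measurable M" for n
    using uniformly_integrable_integrable[OF UI] by blast
  obtain \<Omega> :: "real measure" and Y Y_lim where "prob_space \<Omega>"
    and [measurable]: "\<And>n. Y n \<in> borel_measurable \<Omega>"
    and distr_Y: "\<And>n. distr \<Omega> borel (Y n) = distr M borel (X n)"
    and "Y_lim \<in> measurable \<Omega> lborel" and distr_Y_lim: "distr \<Omega> borel Y_lim = distr M borel Z"
    and lim: "\<And>x. x \<in> space \<Omega> \<Longrightarrow> (\<lambda>n. Y n x) \<longlonglongrightarrow> Y_lim x"
    using Skorohod[OF _ _ weak] by force
  interpret \<Omega>: prob_space \<Omega>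
    by fact
  have [measurable]: "Y_lim \<in> borel_measurable \<Omega>"
    using \<open>Y_lim \<in> measurable \<Omega> lborel\<close> by simp
  have "(\<lambda>n. \<integral>x. Y n x \<partial>\<Omega>) \<longlonglongrightarrow> (\<integral>x. Y_lim x \<partial>\<Omega>)"
    using uniformly_integrable_distr_eq[OF UI distr_Y] lim
    by (intro \<Omega>.integral_tendsto_of_uniformly_integrable) auto
  then show ?thesis
    using integral_comp_eq_of_distr_eq[OF distr_Y _ _ measurable_ident]
      integral_comp_eq_of_distr_eq[OF distr_Y_lim _ _ measurable_ident]
    by simp
qed

lemma abs_cts_step_diff_le:
  assumes "x < y" "a \<le> b"
  shows "\<bar>cts_step x y a - cts_step x y b\<bar> \<le> (b - a) / (y - x)"
proof -
  define s where "s t = (y - t) / (y - x)" for t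
  have clamp: "cts_step x y t = max 0 (min 1 (s t))" for t
    using assms(1) by (auto simp: cts_step_def s_def divide_simps)
  have "\<bar>max 0 (min 1 (s a)) - max 0 (min 1 (s b))\<bar> \<le> \<bar>s a - s b\<bar>"
    by (auto simp: max_def min_def)
  also have "\<bar>s a - s b\<bar> = (b - a) / (y - x)"
    using assms by (simp add: s_def diff_divide_distrib[symmetric])
  finally show ?thesis
    by (simp add: clamp)
qed

lemma abs_cts_step_le: "x < y \<Longrightarrow> \<bar>cts_step x y t\<bar> \<le> 1"
  by (auto simp: cts_step_def field_simps)

lemma isCont_cts_step: "x < y \<Longrightarrow> isCont (cts_step x y) t"
  using cts_step_uniformly_continuous uniformly_continuous_imp_continuous
    continuous_on_eq_continuous_at open_UNIV by blast

lemma cts_step_measurable [measurable]: "cts_step x y \<in> borel_measurable borel"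
  unfolding cts_step_def[abs_def] by measurable

lemma (in prob_space) weak_conv_of_AE_le_of_integral_gap_tendsto_0:
  fixes U W :: "nat \<Rightarrow> 'a \<Rightarrow> real"
  assumes int_U: "\<And>n. integrable M (U n)" and int_W: "\<And>n. integrable M (W n)"
    and le: "\<And>n. AE x in M. U n x \<le> W n x"
    and gap: "(\<lambda>n. \<integral>x. W n x - U n x \<partial>M) \<longlonglongrightarrow> 0"
    and "real_distribution \<mu>" and weak: "weak_conv_m (\<lambda>n. distr M borel (W n)) \<mu>"
  shows "weak_conv_m (\<lambda>n. distr M borel (U n)) \<mu>"
proof (rule integral_cts_step_conv_imp_weak_conv)
  have [measurable]: "U n \<in> borel_measurable M" "W n \<in> borel_measurable M" for n
    using int_U int_W by blast+
  fix x y :: real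
  assume "x < y"
  let ?h = "cts_step x y"
  let ?EU = "\<lambda>n. integral\<^sup>L (distr M borel (U n)) ?h"
  let ?EW = "\<lambda>n. integral\<^sup>L (distr M borel (W n)) ?h"
  have int_h: "integrable M (\<lambda>t. ?h (f t))" if [measurable]: "f \<in> borel_measurable M" for f
    using \<open>x < y\<close> by (intro integrable_const_bound[where B = 1]) (auto simp: abs_cts_step_le)
  have "?EW \<longlonglongrightarrow> integral\<^sup>L \<mu> ?h"
    using \<open>x < y\<close> \<open>real_distribution \<mu>\<close> weak
    by (intro weak_conv_imp_integral_bdd_continuous_conv[where B = 1])
       (auto simp: abs_cts_step_le isCont_cts_step)
  moreover have "(\<lambda>n. ?EU n - ?EW n) \<longlonglongrightarrow> 0"
  proof (rule Lim_null_comparison)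
    show "(\<lambda>n. (\<integral>t. W n t - U n t \<partial>M) / (y - x)) \<longlonglongrightarrow> 0"
      using tendsto_divide[OF gap tendsto_const, of "y - x"] \<open>x < y\<close> by simp
    have "\<bar>?EU n - ?EW n\<bar> \<le> (\<integral>t. W n t - U n t \<partial>M) / (y - x)" for n
    proof -
      have "\<bar>?EU n - ?EW n\<bar> = \<bar>\<integral>t. ?h (U n t) - ?h (W n t) \<partial>M\<bar>"
        by (simp add: integral_distr int_h)
      also have "\<dots> \<le> (\<integral>t. \<bar>?h (U n t) - ?h (W n t)\<bar> \<partial>M)"
        by (rule integral_abs_bound)
      also have "\<dots> \<le> (\<integral>t. (W n t - U n t) / (y - x) \<partial>M)"
        using le[of n] int_U int_W int_h \<open>x < y\<close>
        by (intro integral_mono_AE) (auto intro!: abs_cts_step_diff_le)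
      also have "\<dots> = (\<integral>t. W n t - U n t \<partial>M) / (y - x)"
        by simp
      finally show ?thesis .
    qed
    then show "\<forall>\<^sub>F n in sequentially. norm (?EU n - ?EW n) \<le> (\<integral>t. W n t - U n t \<partial>M) / (y - x)"
      by (simp add: always_eventually)
  qed
  ultimately have "(\<lambda>n. ?EW n + (?EU n - ?EW n)) \<longlonglongrightarrow> integral\<^sup>L \<mu> ?h + 0"
    by (rule tendsto_add)
  then show "?EU \<longlonglongrightarrow> integral\<^sup>L \<mu> ?h"
    by simp
qed (use int_U \<open>real_distribution \<mu>\<close> in auto)

theorem lemma3p5:
  fixes M :: "'a measure"
    and U V' :: "nat \<Rightarrow> 'a \<Rightarrow> real"
    and V :: "'a \<Rightarrow> real"
  assumes "prob_space M"
    and "\<And>n. U n \<in> borel_measurable M"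
    and "\<And>n. V' n \<in> borel_measurable M"
    and "V \<in> borel_measurable M"
    and "uniformly_integrable M U"
    and "uniformly_integrable M V'"
    and "\<And>n. AE x in M. U n x \<le> V' n x"
    and "weak_conv_m (\<lambda>n. distr M borel (V' n)) (distr M borel V)"
    and "(\<lambda>n. \<integral>x. U n x \<partial>M) \<longlonglongrightarrow> (\<integral>x. V x \<partial>M)"
  shows "weak_conv_m (\<lambda>n. distr M borel (U n)) (distr M borel V)"
proof -
  interpret prob_space M
    by fact
  have int_U: "integrable M (U n)" and int_V': "integrable M (V' n)" for n
    using assms(5,6) by (simp_all add: uniformly_integrable_integrable)
  have "(\<lambda>n. \<integral>x. V' n x \<partial>M) \<longlonglongrightarrow> (\<integral>x. V x \<partial>M)"
    using assms(6,4,8) by (rule integral_tendsto_of_weak_conv_uniformly_integrable)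
  from tendsto_diff[OF this assms(9)]
  have gap: "(\<lambda>n. \<integral>x. V' n x - U n x \<partial>M) \<longlonglongrightarrow> 0"
    using int_U int_V' by simp
  show ?thesis
    using int_U int_V' assms(7) gap _ assms(8)
    by (rule weak_conv_of_AE_le_of_integral_gap_tendsto_0) (simp add: assms(4))
qed

end
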